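(* Let $L>0$ and let $X_1,\dots,X_t$ be independent nonnegative discrete random variables, each of which takes value either $0$ or a value at least $L$. If $\sum_{j=1}^t\mathbb{E}[X_j]\ge L$, then $\mathbb{E}[\max_j X_j]\ge L/2$. *)

theory Defs
  imports "HOL-Probability.Probability"
begin

end

theory Submission
  imports Defs
begin

text \<open>
  Let \<open>q\<^sub>i = P(X\<^sub>i = 0)\<close> and \<open>Q = \<Prod>q\<^sub>i = P(all X\<^sub>i = 0)\<close>. The maximum dominates the
  first nonzero \<open>X\<^sub>j\<close>, so by independence \<open>E[max] \<ge> \<Sum>\<^sub>j E[X\<^sub>j] \<Prod>\<^sub>i\<^sub><\<^sub>j q\<^sub>i \<ge> Q \<Sum>\<^sub>j E[X\<^sub>j] \<ge> Q L\<close>.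
  It is also at least \<open>L\<close> whenever some \<open>X\<^sub>i\<close> is nonzero, so \<open>E[max] \<ge> L (1 - Q)\<close>.
  One of \<open>Q\<close>, \<open>1 - Q\<close> is at least \<open>1/2\<close>.
\<close>

lemma sum_first_nonzero_le_Max:
  fixes f :: "nat \<Rightarrow> 'a::linordered_idom"
  assumes "\<And>j. j \<in> {1..t} \<Longrightarrow> f j \<ge> 0"
  shows "(\<Sum>j\<in>{1..t}. f j * (\<Prod>i\<in>{1..<j}. of_bool (f i = 0))) \<le> Max (insert 0 (f ` {1..t}))"
  using assms
proof (induction t)
  case 0
  then show ?case by simp
next
  case (Suc t)
  have split: "(\<Sum>j\<in>{1..Suc t}. f j * (\<Prod>i\<in>{1..<j}. of_bool (f i = 0)))
      = (\<Sum>j\<in>{1..t}. f j * (\<Prod>i\<in>{1..<j}. of_bool (f i = 0)))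
        + f (Suc t) * (\<Prod>i\<in>{1..t}. of_bool (f i = 0))"
    by (simp add: atLeastLessThanSuc_atLeastAtMost)
  show ?case
  proof (cases "\<forall>i\<in>{1..t}. f i = 0")
    case True
    then have "(\<Sum>j\<in>{1..t}. f j * (\<Prod>i\<in>{1..<j}. of_bool (f i = 0))) = 0"
      and "(\<Prod>i\<in>{1..t}. of_bool (f i = 0)) = (1::'a)"
      by (auto intro!: sum.neutral prod.neutral)
    moreover have "f (Suc t) \<le> Max (insert 0 (f ` {1..Suc t}))"
      by (rule Max_ge) auto
    ultimately show ?thesis
      by (simp only: split add_0 mult_1_right)
  next
    case False
    then have "(\<Prod>i\<in>{1..t}. of_bool (f i = 0)) = (0::'a)"
      by (auto intro: prod_zero)
    moreover have "(\<Sum>j\<in>{1..t}. f j * (\<Prod>i\<in>{1..<j}. of_bool (f i = 0))) \<le> Max (insert 0 (f ` {1..t}))"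
      using Suc.prems by (intro Suc.IH) auto
    moreover have "Max (insert 0 (f ` {1..t})) \<le> Max (insert 0 (f ` {1..Suc t}))"
      by (rule Max_mono) auto
    ultimately show ?thesis
      by (simp only: split mult_zero_right add_0_right)
  qed
qed

lemma prod_le_prod_subset:
  fixes q :: "'b \<Rightarrow> 'a::linordered_idom"
  assumes "finite B" "A \<subseteq> B" "\<And>i. i \<in> B \<Longrightarrow> 0 \<le> q i \<and> q i \<le> 1"
  shows "(\<Prod>i\<in>B. q i) \<le> (\<Prod>i\<in>A. q i)"
proof -
  have "(\<Prod>i\<in>B. q i) = (\<Prod>i\<in>B - A. q i) * (\<Prod>i\<in>A. q i)"
    using assms by (simp add: prod.subset_diff)
  moreover have "(\<Prod>i\<in>B - A. q i) \<le> 1" "0 \<le> (\<Prod>i\<in>B - A. q i)" "0 \<le> (\<Prod>i\<in>A. q i)"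
    using assms by (auto intro!: prod_le_1 prod_nonneg)
  ultimately show ?thesis
    by (simp add: mult_left_le_one_le)
qed

context prob_space
begin

lemma nn_integral_mult_prod_of_bool_zero:
  assumes indep: "indep_vars (\<lambda>_. borel) X I"
    and "finite J" "J \<subseteq> I" "j \<in> I" "j \<notin> J"
    and nonneg: "\<And>x. x \<in> space M \<Longrightarrow> X j x \<ge> 0"
  shows "(\<integral>\<^sup>+ x. ennreal (X j x * (\<Prod>i\<in>J. of_bool (X i x = 0))) \<partial>M)
       = (\<integral>\<^sup>+ x. ennreal (X j x) \<partial>M) * (\<Prod>i\<in>J. ennreal (prob (X i -` {0} \<inter> space M)))"
proof -
  define g where "g i v = (if i = j then max v 0 else of_bool (v = 0) :: real)" for i v
  have "g i \<in> borel_measurable borel" for i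
    unfolding g_def by measurable
  then have indep_g: "indep_vars (\<lambda>_. borel) (\<lambda>i x. ennreal (g i (X i x))) (insert j J)"
    using assms by (intro indep_vars_compose2[OF indep_vars_subset[OF indep]]) auto
  have meas: "X i \<in> borel_measurable M" if "i \<in> I" for i
    using indep that by (auto simp: indep_vars_def2)
  have g_zero: "(\<integral>\<^sup>+ x. ennreal (g i (X i x)) \<partial>M) = ennreal (prob (X i -` {0} \<inter> space M))"
    if "i \<in> J" for i
  proof -
    have "(\<integral>\<^sup>+ x. ennreal (g i (X i x)) \<partial>M) = (\<integral>\<^sup>+ x. indicator (X i -` {0} \<inter> space M) x \<partial>M)"
      using that \<open>j \<notin> J\<close> by (intro nn_integral_cong) (auto simp: g_def indicator_def)
    also have "\<dots> = ennreal (prob (X i -` {0} \<inter> space M))"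
      using meas[of i] that \<open>J \<subseteq> I\<close> by (auto simp: emeasure_eq_measure measurable_sets)
    finally show ?thesis .
  qed
  have "(\<integral>\<^sup>+ x. ennreal (X j x * (\<Prod>i\<in>J. of_bool (X i x = 0))) \<partial>M)
      = (\<integral>\<^sup>+ x. (\<Prod>i\<in>insert j J. ennreal (g i (X i x))) \<partial>M)"
  proof (rule nn_integral_cong)
    fix x assume x: "x \<in> space M"
    have "(\<Prod>i\<in>J. ennreal (g i (X i x))) = (\<Prod>i\<in>J. ennreal (of_bool (X i x = 0)))"
      using \<open>j \<notin> J\<close> by (intro prod.cong) (auto simp: g_def)
    also have "\<dots> = ennreal (\<Prod>i\<in>J. of_bool (X i x = 0))"
      by (rule prod_ennreal) auto
    finally have "(\<Prod>i\<in>J. ennreal (g i (X i x))) = ennreal (\<Prod>i\<in>J. of_bool (X i x = 0))" .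
    then show "ennreal (X j x * (\<Prod>i\<in>J. of_bool (X i x = 0))) = (\<Prod>i\<in>insert j J. ennreal (g i (X i x)))"
      using nonneg[OF x] \<open>finite J\<close> \<open>j \<notin> J\<close> by (simp add: g_def ennreal_mult prod_nonneg)
  qed
  also have "\<dots> = (\<Prod>i\<in>insert j J. \<integral>\<^sup>+ x. ennreal (g i (X i x)) \<partial>M)"
    using \<open>finite J\<close> by (intro indep_vars_nn_integral[OF _ indep_g]) auto
  also have "\<dots> = (\<integral>\<^sup>+ x. ennreal (X j x) \<partial>M) * (\<Prod>i\<in>J. ennreal (prob (X i -` {0} \<inter> space M)))"
    using \<open>finite J\<close> \<open>j \<notin> J\<close> nonneg g_zero
    by (simp add: g_def cong: nn_integral_cong prod.cong)
  finally show ?thesis .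
qed

lemma nn_integral_Max_ge_first_nonzero:
  fixes X :: "nat \<Rightarrow> 'a \<Rightarrow> real"
  assumes indep: "indep_vars (\<lambda>_. borel) X {1..t}" and "t \<ge> 1"
    and nonneg: "\<And>j x. j \<in> {1..t} \<Longrightarrow> x \<in> space M \<Longrightarrow> X j x \<ge> 0"
  shows "(\<Sum>j\<in>{1..t}. (\<integral>\<^sup>+ x. ennreal (X j x) \<partial>M) * (\<Prod>i\<in>{1..<j}. ennreal (prob (X i -` {0} \<inter> space M))))
       \<le> (\<integral>\<^sup>+ x. ennreal (Max ((\<lambda>j. X j x) ` {1..t})) \<partial>M)"
proof -
  define contrib where "contrib j x = X j x * (\<Prod>i\<in>{1..<j}. of_bool (X i x = 0))" for j x
  have meas: "X i \<in> borel_measurable M" if "i \<in> {1..t}" for i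
    using indep that by (auto simp: indep_vars_def2)
  have meas_zero: "(\<lambda>x. of_bool (X i x = 0) :: real) \<in> borel_measurable M" if "i \<in> {1..t}" for i
    using meas[OF that] by measurable
  have "(\<lambda>x. ennreal (contrib j x)) \<in> borel_measurable M" if "j \<in> {1..t}" for j
  proof -
    have "(\<lambda>x. \<Prod>i\<in>{1..<j}. of_bool (X i x = 0) :: real) \<in> borel_measurable M"
      using that by (intro borel_measurable_prod meas_zero) auto
    then show ?thesis
      unfolding contrib_def using meas[OF that] by measurable
  qed
  then have "(\<Sum>j\<in>{1..t}. (\<integral>\<^sup>+ x. ennreal (X j x) \<partial>M) * (\<Prod>i\<in>{1..<j}. ennreal (prob (X i -` {0} \<inter> space M))))
      = (\<integral>\<^sup>+ x. (\<Sum>j\<in>{1..t}. ennreal (contrib j x)) \<partial>M)"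
    unfolding contrib_def using nonneg
    by (subst nn_integral_sum) (auto intro!: sum.cong nn_integral_mult_prod_of_bool_zero[OF indep, symmetric])
  also have "\<dots> \<le> (\<integral>\<^sup>+ x. ennreal (Max ((\<lambda>j. X j x) ` {1..t})) \<partial>M)"
  proof (rule nn_integral_mono)
    fix x assume x: "x \<in> space M"
    have "X 1 x \<le> Max ((\<lambda>j. X j x) ` {1..t})"
      using \<open>t \<ge> 1\<close> by (intro Max_ge) auto
    moreover have "0 \<le> X 1 x"
      using \<open>t \<ge> 1\<close> nonneg[of 1 x] x by simp
    ultimately have "0 \<le> Max ((\<lambda>j. X j x) ` {1..t})"
      by linarith
    then have "Max (insert 0 ((\<lambda>j. X j x) ` {1..t})) = Max ((\<lambda>j. X j x) ` {1..t})"
      using \<open>t \<ge> 1\<close> by (subst Max_insert) auto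
    then have "(\<Sum>j\<in>{1..t}. contrib j x) \<le> Max ((\<lambda>j. X j x) ` {1..t})"
      unfolding contrib_def using sum_first_nonzero_le_Max[of t "\<lambda>j. X j x"] nonneg[OF _ x] by simp
    moreover have "0 \<le> contrib j x" if "j \<in> {1..t}" for j
      unfolding contrib_def using nonneg[OF that x] by (simp add: prod_nonneg)
    ultimately show "(\<Sum>j\<in>{1..t}. ennreal (contrib j x)) \<le> ennreal (Max ((\<lambda>j. X j x) ` {1..t}))"
      by (subst sum_ennreal) (auto intro: ennreal_leI)
  qed
  finally show ?thesis .
qed

lemma nn_integral_Max_ge_prob_all_zero_mult_sum:
  fixes X :: "nat \<Rightarrow> 'a \<Rightarrow> real"
  assumes indep: "indep_vars (\<lambda>_. borel) X {1..t}" and "t \<ge> 1"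
    and nonneg: "\<And>j x. j \<in> {1..t} \<Longrightarrow> x \<in> space M \<Longrightarrow> X j x \<ge> 0"
  shows "ennreal (\<Prod>i\<in>{1..t}. prob (X i -` {0} \<inter> space M)) * (\<Sum>j\<in>{1..t}. \<integral>\<^sup>+ x. ennreal (X j x) \<partial>M)
       \<le> (\<integral>\<^sup>+ x. ennreal (Max ((\<lambda>j. X j x) ` {1..t})) \<partial>M)"
proof -
  have prefix: "ennreal (\<Prod>i\<in>{1..t}. prob (X i -` {0} \<inter> space M))
      \<le> (\<Prod>i\<in>{1..<j}. ennreal (prob (X i -` {0} \<inter> space M)))" if "j \<in> {1..t}" for j
  proof -
    have "(\<Prod>i\<in>{1..t}. prob (X i -` {0} \<inter> space M)) \<le> (\<Prod>i\<in>{1..<j}. prob (X i -` {0} \<inter> space M))"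
      using that by (intro prod_le_prod_subset) auto
    then show ?thesis
      by (subst prod_ennreal) (auto intro: ennreal_leI)
  qed
  have "ennreal (\<Prod>i\<in>{1..t}. prob (X i -` {0} \<inter> space M)) * (\<Sum>j\<in>{1..t}. \<integral>\<^sup>+ x. ennreal (X j x) \<partial>M)
      \<le> (\<Sum>j\<in>{1..t}. (\<integral>\<^sup>+ x. ennreal (X j x) \<partial>M) * (\<Prod>i\<in>{1..<j}. ennreal (prob (X i -` {0} \<inter> space M))))"
    unfolding sum_distrib_left using prefix by (intro sum_mono) (metis mult.commute mult_left_mono zero_le)
  also have "\<dots> \<le> (\<integral>\<^sup>+ x. ennreal (Max ((\<lambda>j. X j x) ` {1..t})) \<partial>M)"
    using assms by (rule nn_integral_Max_ge_first_nonzero)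
  finally show ?thesis .
qed

lemma nn_integral_Max_ge_some_nonzero:
  assumes indep: "indep_vars (\<lambda>_. borel) X I" and "finite I" "I \<noteq> {}"
    and gap: "\<And>j x. j \<in> I \<Longrightarrow> x \<in> space M \<Longrightarrow> X j x = 0 \<or> X j x \<ge> L"
  shows "ennreal L * ennreal (1 - (\<Prod>i\<in>I. prob (X i -` {0} \<inter> space M)))
       \<le> (\<integral>\<^sup>+ x. ennreal (Max ((\<lambda>j. X j x) ` I)) \<partial>M)"
proof -
  define S where "S = (\<Inter>i\<in>I. X i -` {0} \<inter> space M)"
  have S: "S \<in> sets M"
    unfolding S_def using indep \<open>I \<noteq> {}\<close> \<open>finite I\<close>
    by (intro sets.finite_INT measurable_sets) (auto simp: indep_vars_def2)
  have "prob S = (\<Prod>i\<in>I. prob (X i -` {0} \<inter> space M))"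
    unfolding S_def using assms by (intro indep_varsD[OF indep]) auto
  then have "ennreal L * ennreal (1 - (\<Prod>i\<in>I. prob (X i -` {0} \<inter> space M)))
      = (\<integral>\<^sup>+ x. ennreal L * indicator (space M - S) x \<partial>M)"
    using S by (simp add: nn_integral_cmult_indicator emeasure_eq_measure prob_compl)
  also have "\<dots> \<le> (\<integral>\<^sup>+ x. ennreal (Max ((\<lambda>j. X j x) ` I)) \<partial>M)"
  proof (rule nn_integral_mono)
    fix x assume x: "x \<in> space M"
    show "ennreal L * indicator (space M - S) x \<le> ennreal (Max ((\<lambda>j. X j x) ` I))"
    proof (cases "x \<in> S")
      case False
      then obtain i where i: "i \<in> I" "X i x \<noteq> 0"
        using x \<open>I \<noteq> {}\<close> unfolding S_def by auto
      then have "L \<le> X i x"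
        using gap[OF i(1) x] by auto
      also have "X i x \<le> Max ((\<lambda>j. X j x) ` I)"
        using i \<open>finite I\<close> by (intro Max_ge) auto
      finally show ?thesis
        using False x by (simp add: ennreal_leI)
    qed simp
  qed
  finally show ?thesis .
qed

end

theorem mainTheorem3:
  fixes M :: "'a measure" and X :: "nat \<Rightarrow> 'a \<Rightarrow> real" and L :: real and t :: nat
  assumes "prob_space M"
    and "L > 0"
    and "prob_space.indep_vars M (\<lambda>_. borel) X {1..t}"
    and "\<And>j. j \<in> {1..t} \<Longrightarrow> countable (X j ` space M)"
    and "\<And>j x. j \<in> {1..t} \<Longrightarrow> x \<in> space M \<Longrightarrow> X j x = 0 \<or> X j x \<ge> L"
    and "(\<Sum>j\<in>{1..t}. \<integral>\<^sup>+ x. ennreal (X j x) \<partial>M) \<ge> ennreal L"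
  shows "(\<integral>\<^sup>+ x. ennreal (Max ((\<lambda>j. X j x) ` {1..t})) \<partial>M) \<ge> ennreal (L / 2)"
proof -
  interpret prob_space M by fact
  define Q where "Q = (\<Prod>i\<in>{1..t}. prob (X i -` {0} \<inter> space M))"
  have "t \<ge> 1"
    using assms(2,6) by (cases t) auto
  have nonneg: "X j x \<ge> 0" if "j \<in> {1..t}" "x \<in> space M" for j x
    using assms(2) assms(5)[OF that] by auto
  have "0 \<le> Q" "Q \<le> 1"
    unfolding Q_def by (auto intro: prod_nonneg prod_le_1)
  have "L / 2 \<le> Q * L \<or> L / 2 \<le> L * (1 - Q)"
    using assms(2) by (cases "Q \<ge> 1/2") (simp_all add: field_simps)
  then show ?thesis
  proof
    assume "L / 2 \<le> Q * L"
    then have "ennreal (L / 2) \<le> ennreal Q * ennreal L"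
      using \<open>0 \<le> Q\<close> by (simp add: ennreal_mult'[symmetric] ennreal_leI)
    also have "\<dots> \<le> ennreal Q * (\<Sum>j\<in>{1..t}. \<integral>\<^sup>+ x. ennreal (X j x) \<partial>M)"
      using assms(6) by (rule mult_left_mono) simp
    also have "\<dots> \<le> (\<integral>\<^sup>+ x. ennreal (Max ((\<lambda>j. X j x) ` {1..t})) \<partial>M)"
      unfolding Q_def using assms(3) \<open>t \<ge> 1\<close> nonneg by (rule nn_integral_Max_ge_prob_all_zero_mult_sum)
    finally show ?thesis .
  next
    assume "L / 2 \<le> L * (1 - Q)"
    then have "ennreal (L / 2) \<le> ennreal L * ennreal (1 - Q)"
      using \<open>Q \<le> 1\<close> by (simp add: ennreal_mult''[symmetric] ennreal_leI)
    also have "\<dots> \<le> (\<integral>\<^sup>+ x. ennreal (Max ((\<lambda>j. X j x) ` {1..t})) \<partial>M)"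
      unfolding Q_def using \<open>t \<ge> 1\<close> assms(5) by (intro nn_integral_Max_ge_some_nonzero[OF assms(3)]) auto
    finally show ?thesis .
  qed
qed

end
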